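(* Suppose the system is DFS$_m$, and define $V:\mathbb{R}^n\to\mathbb{R}$ by $$V(x_0)=\inf_{\Psi\in\mathcal{C}^d_m}\ \sup_{\sigma\in\Sigma^\omega}\ \sum_{k=0}^{\infty}\|\phi(k,\sigma,x_0,\Psi)\|,$$ where $\mathcal{C}^d_m$ is the set of all functions $\mathcal{H}\to\mathbb{R}^m$. Then $V$ is a norm on $\mathbb{R}^n$, it satisfies $$V(x)=\|x\|+\max_{i\in\Sigma}\min_{u\in\mathbb{R}^m}V(A_ix+B_iu)\quad\text{for all }x\in\mathbb{R}^n$$ (the minima being attained), and any $\Phi_d:\Sigma\times\mathbb{R}^n\to\mathbb{R}^m$ with $\Phi_d(i,x)\in\arg\min_{u\in\mathbb{R}^m}V(A_ix+B_iu)$ for all $i\in\Sigma$, $x\in\mathbb{R}^n$ makes the closed loop $x(k+1)=A_{\sigma(k)}x(k)+B_{\sigma(k)}\Phi_d(\sigma(k),x(k))$ uniformly exponentially stable, with $V$ as a Lyapunov function: there exists $\tilde\gamma\in[0,1)$ with $V(A_ix+B_i\Phi_d(i,x))\le\tilde\gamma V(x)$ for all $i\in\Sigma$, $x\in\mathbb{R}^n$.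
   Context: Let $\Sigma$ be a finite nonempty set and $\{(A_i,B_i)\in\mathbb{R}^{n\times n}\times\mathbb{R}^{n\times m} : i\in\Sigma\}$. Consider $x(k+1)=A_{\sigma(k)}x(k)+B_{\sigma(k)}u(k)$, $k\in\mathbb{N}=\{0,1,\dots\}$, with arbitrary switching signal $\sigma:\mathbb{N}\to\Sigma$ (set of all such: $\Sigma^\omega$). $\|\cdot\|$ is the Euclidean norm. $\mathcal{H}$ is the set of all tuples $(x_k,\dots,x_0;\,i_k,\dots,i_0)$ with $k\in\mathbb{N}$, $x_j\in\mathbb{R}^n$, $i_j\in\Sigma$. For a function $\Psi:\mathcal{H}\to\mathbb{R}^m$ (a current-mode-dependent controller with memory), $\phi(k,\sigma,x_0,\Psi)$ denotes the closed-loop trajectory defined by $x(0)=x_0$ and $x(k+1)=A_{\sigma(k)}x(k)+B_{\sigma(k)}\Psi(x(k),\dots,x(0);\,\sigma(k),\dots,\sigma(0))$. The system is DFS$_m$ if there exist such $\Psi$ and constants $M>0,\gamma\in[0,1)$ with $\|\phi(k,\sigma,x_0,\Psi)\|\le M\gamma^k\|x_0\|$ for all $x_0\in\mathbb{R}^n,\sigma\in\Sigma^\omega,k\in\mathbb{N}$. A closed loop is uniformly exponentially stable if there exist $M>0,\gamma\in[0,1)$ with $\|x(k)\|\le M\gamma^k\|x(0)\|$ for all initial states, all $\sigma\in\Sigma^\omega$ and all $k\in\mathbb{N}$. *)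

theory Defs
  imports "HOL-Analysis.Analysis"
begin

text \<open>A controller with memory Psi takes the history (x_k,...,x_0; i_k,...,i_0),
  encoded as two lists with the newest entry first.\<close>

fun hist_traj ::
  "('s \<Rightarrow> real^'n^'n) \<Rightarrow> ('s \<Rightarrow> real^'m^'n)
   \<Rightarrow> ((real^'n) list \<Rightarrow> 's list \<Rightarrow> real^'m)
   \<Rightarrow> (nat \<Rightarrow> 's) \<Rightarrow> real^'n \<Rightarrow> nat \<Rightarrow> (real^'n) list" where
  "hist_traj A B Psi \<sigma> x0 0 = [x0]"
| "hist_traj A B Psi \<sigma> x0 (Suc k) =
     (let h = hist_traj A B Psi \<sigma> x0 k
      in (A (\<sigma> k) *v hd h + B (\<sigma> k) *v Psi h (map \<sigma> (rev [0..<Suc k]))) # h)"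

definition phi ::
  "('s \<Rightarrow> real^'n^'n) \<Rightarrow> ('s \<Rightarrow> real^'m^'n) \<Rightarrow> nat \<Rightarrow> (nat \<Rightarrow> 's) \<Rightarrow> real^'n
   \<Rightarrow> ((real^'n) list \<Rightarrow> 's list \<Rightarrow> real^'m) \<Rightarrow> real^'n" where
  "phi A B k \<sigma> x0 Psi = hd (hist_traj A B Psi \<sigma> x0 k)"

definition DFS_m :: "('s \<Rightarrow> real^'n^'n) \<Rightarrow> ('s \<Rightarrow> real^'m^'n) \<Rightarrow> bool" where
  "DFS_m A B \<longleftrightarrow> (\<exists>Psi M \<gamma>. M > 0 \<and> 0 \<le> \<gamma> \<and> \<gamma> < 1 \<and>
     (\<forall>x0 \<sigma> k. norm (phi A B k \<sigma> x0 Psi) \<le> M * \<gamma> ^ k * norm x0))"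

definition V_enn :: "('s \<Rightarrow> real^'n^'n) \<Rightarrow> ('s \<Rightarrow> real^'m^'n) \<Rightarrow> real^'n \<Rightarrow> ennreal" where
  "V_enn A B x0 = (INF Psi. SUP \<sigma>. (\<Sum>k. ennreal (norm (phi A B k \<sigma> x0 Psi))))"

definition V :: "('s \<Rightarrow> real^'n^'n) \<Rightarrow> ('s \<Rightarrow> real^'m^'n) \<Rightarrow> real^'n \<Rightarrow> real" where
  "V A B x0 = enn2real (V_enn A B x0)"

definition is_norm :: "(real^'n \<Rightarrow> real) \<Rightarrow> bool" where
  "is_norm f \<longleftrightarrow> (\<forall>x. f x \<ge> 0) \<and> (\<forall>x. f x = 0 \<longleftrightarrow> x = 0) \<and>
     (\<forall>c x. f (c *\<^sub>R x) = \<bar>c\<bar> * f x) \<and> (\<forall>x y. f (x + y) \<le> f x + f y)"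

fun cl_traj :: "('s \<Rightarrow> real^'n^'n) \<Rightarrow> ('s \<Rightarrow> real^'m^'n) \<Rightarrow> ('s \<Rightarrow> real^'n \<Rightarrow> real^'m)
   \<Rightarrow> (nat \<Rightarrow> 's) \<Rightarrow> real^'n \<Rightarrow> nat \<Rightarrow> real^'n" where
  "cl_traj A B Phi \<sigma> x0 0 = x0"
| "cl_traj A B Phi \<sigma> x0 (Suc k) =
     A (\<sigma> k) *v cl_traj A B Phi \<sigma> x0 k + B (\<sigma> k) *v Phi (\<sigma> k) (cl_traj A B Phi \<sigma> x0 k)"

definition UES :: "('s \<Rightarrow> real^'n^'n) \<Rightarrow> ('s \<Rightarrow> real^'m^'n) \<Rightarrow> ('s \<Rightarrow> real^'n \<Rightarrow> real^'m) \<Rightarrow> bool" where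
  "UES A B Phi \<longleftrightarrow> (\<exists>M \<gamma>. M > 0 \<and> 0 \<le> \<gamma> \<and> \<gamma> < 1 \<and>
     (\<forall>x0 \<sigma> k. norm (cl_traj A B Phi \<sigma> x0 k) \<le> M * \<gamma> ^ k * norm x0))"

end

theory Submission
  imports Defs
begin

text \<open>For a fixed initial state, the states visited under a controller with memory are
  determined by the modes seen so far, so it suffices to minimise over open-loop controllers
  that assign an input to every nonempty word of modes. These controllers form a vector space
  on which the trajectory depends linearly, jointly with the initial state; hence the value
  \<open>V\<close> is subadditive and homogeneous. It lies between \<open>\<parallel>x\<parallel>\<close> (the first term of every cost)
  and \<open>C \<parallel>x\<parallel>\<close> (the geometric bound granted by DFS), so it is a norm.
  Splitting off the first step of the cost gives the Bellman equation: the switching picks the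
  first mode \<open>i\<close>, the controller the first input \<open>u\<close>, and the game restarts at
  \<open>A i x + B i u\<close>. Minimisers exist since \<open>V\<close> is continuous and coercive, and along a
  minimising feedback the Bellman equation gives \<open>V x' \<le> V x - \<parallel>x\<parallel> \<le> (1 - 1/C) V x\<close>.\<close>

text \<open>The simp rule \<open>suminf_ennreal\<close> loops on sums of the form \<open>\<Sum>k. ennreal (norm \<dots>)\<close>:
  its side condition mentions the very sum it rewrites.\<close>

declare suminf_ennreal [simp del]

lemma INF_eq_of_is_arg_min:
  fixes f :: "'a \<Rightarrow> 'b::conditionally_complete_linorder"
  assumes "is_arg_min f (\<lambda>_. True) u"
  shows "(INF v. f v) = f u"
  using assms unfolding is_arg_min_linorder by (intro cInf_eq_minimum) auto

lemma continuous_coercive_attains_inf: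
  fixes f :: "'a::{real_normed_vector, heine_borel} \<Rightarrow> real"
  assumes "closed S" "c \<in> S" "continuous_on S f" "\<And>y. y \<in> S \<Longrightarrow> norm y \<le> f y"
  obtains y where "y \<in> S" "\<And>z. z \<in> S \<Longrightarrow> f y \<le> f z"
proof -
  define K where "K = S \<inter> cball 0 (f c)"
  have "compact K" unfolding K_def using assms(1) by (rule closed_Int_compact) simp
  have "c \<in> K" unfolding K_def using assms(2) assms(4)[of c] by simp
  have "continuous_on K f" using assms(3) by (rule continuous_on_subset) (simp add: K_def)
  obtain y where y: "y \<in> K" "\<And>z. z \<in> K \<Longrightarrow> f y \<le> f z"
    using continuous_attains_inf[OF \<open>compact K\<close> _ \<open>continuous_on K f\<close>] \<open>c \<in> K\<close> by blast
  have "f y \<le> f z" if "z \<in> S" for z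
  proof (cases "z \<in> K")
    case False
    then have "f c < norm z" using that by (simp add: K_def)
    then show ?thesis using y(2)[OF \<open>c \<in> K\<close>] assms(4)[OF that] by simp
  qed (use y in blast)
  moreover have "y \<in> S" using y(1) by (simp add: K_def)
  ultimately show ?thesis by (rule that[rotated])
qed

lemma closed_range_affine_mat:
  fixes L :: "real^'m^'n"
  shows "closed (range (\<lambda>u. c + L *v u))"
proof -
  have "subspace (range ((*v) L))"
    by (rule linear_subspace_image) (simp_all add: matrix_vector_mul_linear subspace_UNIV)
  then have "closed (range ((*v) L))" by (rule closed_subspace)
  then have "closed ((+) c ` range ((*v) L))" by (rule closed_translation)
  then show ?thesis by (simp add: image_image)
qed

lemma is_norm_lipschitz:
  assumes "is_norm f" "0 \<le> C" "\<And>x. f x \<le> C * norm x"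
  shows "C-lipschitz_on UNIV f"
proof (rule lipschitz_onI)
  fix x y
  have "f x \<le> f (x - y) + f y" "f y \<le> f (y - x) + f x"
    using assms(1) unfolding is_norm_def by (metis diff_add_cancel)+
  moreover have "f (x - y) \<le> C * dist x y" "f (y - x) \<le> C * dist x y"
    using assms(3)[of "x - y"] assms(3)[of "y - x"] by (simp_all add: dist_norm norm_minus_commute)
  ultimately show "dist (f x) (f y) \<le> C * dist x y" by (simp add: dist_real_def abs_le_iff)
qed (rule assms(2))

lemma UES_of_Lyapunov:
  fixes W :: "real^'n \<Rightarrow> real"
  assumes "\<And>x. norm x \<le> W x" "\<And>x. W x \<le> C * norm x" "0 \<le> \<gamma>" "\<gamma> < 1"
    and decrease: "\<And>i x. W (A i *v x + B i *v Phi i x) \<le> \<gamma> * W x"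
  shows "UES A B Phi"
proof -
  have W_traj: "W (cl_traj A B Phi \<sigma> x k) \<le> \<gamma> ^ k * W x" for \<sigma> x k
  proof (induction k)
    case (Suc k)
    have "W (cl_traj A B Phi \<sigma> x (Suc k)) \<le> \<gamma> * W (cl_traj A B Phi \<sigma> x k)"
      using decrease by simp
    also have "\<dots> \<le> \<gamma> ^ Suc k * W x"
      using mult_left_mono[OF Suc.IH assms(3)] by (simp add: mult.assoc)
    finally show ?case .
  qed simp
  have "norm (cl_traj A B Phi \<sigma> x k) \<le> max C 1 * \<gamma> ^ k * norm x" for \<sigma> x k
  proof -
    have "norm (cl_traj A B Phi \<sigma> x k) \<le> \<gamma> ^ k * W x" using assms(1) W_traj order_trans by blast
    also have "\<dots> \<le> \<gamma> ^ k * (max C 1 * norm x)"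
    proof (intro mult_left_mono)
      show "W x \<le> max C 1 * norm x"
        using assms(2)[of x] mult_right_mono[OF max.cobounded1 norm_ge_zero] by (rule order_trans)
    qed (use assms(3) in simp)
    finally show ?thesis by (simp add: mult_ac)
  qed
  then show ?thesis unfolding UES_def using assms(3,4) by (intro exI[of _ "max C 1"] exI[of _ \<gamma>]) auto
qed

lemma phi_Suc:
  "phi A B (Suc k) \<sigma> x Psi = A (\<sigma> k) *v phi A B k \<sigma> x Psi
     + B (\<sigma> k) *v Psi (hist_traj A B Psi \<sigma> x k) (map \<sigma> (rev [0..<Suc k]))"
  by (simp add: phi_def Let_def)

lemma hist_traj_cong:
  "(\<And>j. j < k \<Longrightarrow> \<sigma> j = \<sigma>' j) \<Longrightarrow> hist_traj A B Psi \<sigma> x k = hist_traj A B Psi \<sigma>' x k"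
proof (induction k)
  case (Suc k)
  have "map \<sigma> (rev [0..<Suc k]) = map \<sigma>' (rev [0..<Suc k])" "\<sigma> k = \<sigma>' k"
    using Suc.prems by (auto simp del: upt_Suc)
  moreover have "hist_traj A B Psi \<sigma> x k = hist_traj A B Psi \<sigma>' x k"
    using Suc by simp
  ultimately show ?case by (simp only: hist_traj.simps Let_def)
qed simp

locale switched_system =
  fixes A :: "'s \<Rightarrow> real^'n^'n" and B :: "'s \<Rightarrow> real^'m^'n"
begin

fun traj :: "('s list \<Rightarrow> real^'m) \<Rightarrow> (nat \<Rightarrow> 's) \<Rightarrow> real^'n \<Rightarrow> nat \<Rightarrow> real^'n" where
  "traj U \<sigma> x 0 = x"
| "traj U \<sigma> x (Suc k) = A (\<sigma> k) *v traj U \<sigma> x k + B (\<sigma> k) *v U (map \<sigma> [0..<Suc k])"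

definition cost :: "('s list \<Rightarrow> real^'m) \<Rightarrow> (nat \<Rightarrow> 's) \<Rightarrow> real^'n \<Rightarrow> ennreal" where
  "cost U \<sigma> x = (\<Sum>k. ennreal (norm (traj U \<sigma> x k)))"

definition worst_cost :: "('s list \<Rightarrow> real^'m) \<Rightarrow> real^'n \<Rightarrow> ennreal" where
  "worst_cost U x = (SUP \<sigma>. cost U \<sigma> x)"

lemma phi_eq_traj: "phi A B k \<sigma> x (\<lambda>_ s. U (rev s)) = traj U \<sigma> x k"
  by (induction k) (simp_all add: phi_def Let_def rev_map del: upt_Suc)

lemma ex_traj_eq_phi: "\<exists>U. \<forall>k \<sigma>. traj U \<sigma> x k = phi A B k \<sigma> x Psi"
proof -
  define U where "U s = Psi (hist_traj A B Psi ((!) s) x (length s - 1)) (rev s)" for s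
  have "traj U \<sigma> x k = phi A B k \<sigma> x Psi" for k \<sigma>
  proof (induction k)
    case (Suc k)
    have "hist_traj A B Psi ((!) (map \<sigma> [0..<Suc k])) x k = hist_traj A B Psi \<sigma> x k"
      by (rule hist_traj_cong) (simp del: upt_Suc)
    then have "U (map \<sigma> [0..<Suc k]) = Psi (hist_traj A B Psi \<sigma> x k) (map \<sigma> (rev [0..<Suc k]))"
      by (simp add: U_def rev_map del: upt_Suc)
    with Suc.IH show ?case by (simp add: phi_Suc del: upt_Suc)
  qed (simp add: phi_def)
  then show ?thesis by blast
qed

lemma V_enn_eq_INF_worst_cost: "V_enn A B x = (INF U. worst_cost U x)"
proof (rule antisym)
  show "V_enn A B x \<le> (INF U. worst_cost U x)"
  proof (rule INF_greatest)
    fix U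
    have "V_enn A B x \<le> (SUP \<sigma>. \<Sum>k. ennreal (norm (phi A B k \<sigma> x (\<lambda>_ s. U (rev s)))))"
      unfolding V_enn_def by (rule INF_lower[of "\<lambda>_ s. U (rev s)"]) simp
    then show "V_enn A B x \<le> worst_cost U x"
      by (simp add: worst_cost_def cost_def phi_eq_traj)
  qed
  show "(INF U. worst_cost U x) \<le> V_enn A B x"
    unfolding V_enn_def
  proof (rule INF_greatest)
    fix Psi
    obtain U where "\<forall>k \<sigma>. traj U \<sigma> x k = phi A B k \<sigma> x Psi" using ex_traj_eq_phi by blast
    then have "worst_cost U x = (SUP \<sigma>. \<Sum>k. ennreal (norm (phi A B k \<sigma> x Psi)))"
      by (simp add: worst_cost_def cost_def)
    moreover have "(INF U. worst_cost U x) \<le> worst_cost U x"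
      by (rule INF_lower[of U]) simp
    ultimately show "(INF U. worst_cost U x) \<le> (SUP \<sigma>. \<Sum>k. ennreal (norm (phi A B k \<sigma> x Psi)))"
      by simp
  qed
qed

lemma V_enn_le_worst_cost: "V_enn A B x \<le> worst_cost U x"
  unfolding V_enn_eq_INF_worst_cost by (rule INF_lower) simp

lemma cost_le_worst_cost: "cost U \<sigma> x \<le> worst_cost U x"
  unfolding worst_cost_def by (rule SUP_upper) simp

lemma traj_linear:
  "traj (\<lambda>s. a *\<^sub>R U s + b *\<^sub>R U' s) \<sigma> (a *\<^sub>R x + b *\<^sub>R y) k
     = a *\<^sub>R traj U \<sigma> x k + b *\<^sub>R traj U' \<sigma> y k"
  by (induction k)
    (simp_all add: matrix_vector_right_distrib matrix_vector_mult_scaleR algebra_simps del: upt_Suc)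

lemma traj_cong: "(\<And>s. s \<noteq> [] \<Longrightarrow> U s = U' s) \<Longrightarrow> traj U \<sigma> x k = traj U' \<sigma> x k"
  by (induction k) (simp_all del: upt_Suc)

lemma traj_Suc_shift:
  "traj U \<sigma> x (Suc k) = traj (\<lambda>s. U (\<sigma> 0 # s)) (\<sigma> \<circ> Suc) (A (\<sigma> 0) *v x + B (\<sigma> 0) *v U [\<sigma> 0]) k"
proof (induction k)
  case (Suc k)
  have "map \<sigma> [0..<Suc (Suc k)] = \<sigma> 0 # map (\<sigma> \<circ> Suc) [0..<Suc k]"
    by (simp only: upt_conv_Cons map_Suc_upt[symmetric]) simp
  with Suc.IH show ?case by (simp add: comp_def del: upt_Suc)
qed simp

lemma cost_shift:
  "cost U \<sigma> x = ennreal (norm x)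
     + cost (\<lambda>s. U (\<sigma> 0 # s)) (\<sigma> \<circ> Suc) (A (\<sigma> 0) *v x + B (\<sigma> 0) *v U [\<sigma> 0])"
  unfolding cost_def
  by (subst suminf_offset[where i = 1]) (simp_all add: summableI traj_Suc_shift add.commute del: traj.simps(2))

lemma norm_le_cost: "ennreal (norm x) \<le> cost U \<sigma> x"
  by (subst cost_shift) simp

lemma cost_linear_le:
  "cost (\<lambda>s. a *\<^sub>R U s + b *\<^sub>R U' s) \<sigma> (a *\<^sub>R x + b *\<^sub>R y)
     \<le> ennreal \<bar>a\<bar> * cost U \<sigma> x + ennreal \<bar>b\<bar> * cost U' \<sigma> y"
proof -
  have "ennreal (norm (a *\<^sub>R traj U \<sigma> x k + b *\<^sub>R traj U' \<sigma> y k))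
      \<le> ennreal \<bar>a\<bar> * ennreal (norm (traj U \<sigma> x k)) + ennreal \<bar>b\<bar> * ennreal (norm (traj U' \<sigma> y k))"
    for k
  proof -
    have "norm (a *\<^sub>R traj U \<sigma> x k + b *\<^sub>R traj U' \<sigma> y k)
        \<le> \<bar>a\<bar> * norm (traj U \<sigma> x k) + \<bar>b\<bar> * norm (traj U' \<sigma> y k)"
      using norm_triangle_ineq[of "a *\<^sub>R traj U \<sigma> x k" "b *\<^sub>R traj U' \<sigma> y k"] by simp
    then have "ennreal (norm (a *\<^sub>R traj U \<sigma> x k + b *\<^sub>R traj U' \<sigma> y k))
        \<le> ennreal (\<bar>a\<bar> * norm (traj U \<sigma> x k) + \<bar>b\<bar> * norm (traj U' \<sigma> y k))"
      by (rule ennreal_leI)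
    then show ?thesis by (simp add: ennreal_mult)
  qed
  then have "cost (\<lambda>s. a *\<^sub>R U s + b *\<^sub>R U' s) \<sigma> (a *\<^sub>R x + b *\<^sub>R y)
      \<le> (\<Sum>k. ennreal \<bar>a\<bar> * ennreal (norm (traj U \<sigma> x k))
             + ennreal \<bar>b\<bar> * ennreal (norm (traj U' \<sigma> y k)))"
    unfolding cost_def traj_linear by (intro suminf_le summableI)
  also have "\<dots> = ennreal \<bar>a\<bar> * cost U \<sigma> x + ennreal \<bar>b\<bar> * cost U' \<sigma> y"
    unfolding cost_def by (simp add: suminf_add[OF summableI summableI, symmetric])
  finally show ?thesis .
qed

lemma norm_add_worst_cost_Cons_le:
  "ennreal (norm x) + worst_cost (\<lambda>s. U (i # s)) (A i *v x + B i *v U [i]) \<le> worst_cost U x"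
  unfolding worst_cost_def ennreal_SUP_add_right[OF UNIV_not_empty]
proof (rule SUP_least)
  fix \<sigma>
  have "ennreal (norm x) + cost (\<lambda>s. U (i # s)) \<sigma> (A i *v x + B i *v U [i]) = cost U (case_nat i \<sigma>) x"
    using cost_shift[of U "case_nat i \<sigma>" x] by (simp add: comp_def)
  also have "\<dots> \<le> (SUP \<sigma>. cost U \<sigma> x)"
    by (rule SUP_upper) simp
  finally show "ennreal (norm x) + cost (\<lambda>s. U (i # s)) \<sigma> (A i *v x + B i *v U [i]) \<le> (SUP \<sigma>. cost U \<sigma> x)" .
qed

text \<open>The value at the empty word is junk: trajectories never query it.\<close>

definition cons_controller :: "('s \<Rightarrow> real^'m) \<Rightarrow> ('s \<Rightarrow> 's list \<Rightarrow> real^'m) \<Rightarrow> 's list \<Rightarrow> real^'m" where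
  "cons_controller u W s = (case s of [] \<Rightarrow> 0 | i # s' \<Rightarrow> if s' = [] then u i else W i s')"

lemma cost_cons_controller:
  "cost (cons_controller u W) \<sigma> x
     = ennreal (norm x) + cost (W (\<sigma> 0)) (\<sigma> \<circ> Suc) (A (\<sigma> 0) *v x + B (\<sigma> 0) *v u (\<sigma> 0))"
proof -
  have "traj (\<lambda>s. cons_controller u W (\<sigma> 0 # s)) \<tau> y k = traj (W (\<sigma> 0)) \<tau> y k" for \<tau> y k
    by (rule traj_cong) (simp add: cons_controller_def)
  then show ?thesis
    by (subst cost_shift) (simp add: cost_def cons_controller_def)
qed

end

locale dfs_system = switched_system A B
  for A :: "'s \<Rightarrow> real^'n^'n" and B :: "'s \<Rightarrow> real^'m^'n" +
  assumes dfs: "DFS_m A B"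
begin

lemma V_enn_bound: "\<exists>C\<ge>1. \<forall>x. V_enn A B x \<le> ennreal (C * norm x)"
proof -
  obtain Psi M \<gamma> where M: "0 < M" "0 \<le> \<gamma>" "\<gamma> < 1"
    and decay: "\<forall>x \<sigma> k. norm (phi A B k \<sigma> x Psi) \<le> M * \<gamma> ^ k * norm x"
    using dfs unfolding DFS_m_def by blast
  define C where "C = max 1 (M / (1 - \<gamma>))"
  have cost_bound: "(\<Sum>k. ennreal (norm (phi A B k \<sigma> x Psi))) \<le> ennreal (C * norm x)" for x \<sigma>
  proof -
    have geom: "(\<lambda>k. M * norm x * \<gamma> ^ k) sums (M * norm x * (1 / (1 - \<gamma>)))"
      using M by (intro sums_mult geometric_sums) simp
    have "ennreal (norm (phi A B k \<sigma> x Psi)) \<le> ennreal (M * norm x * \<gamma> ^ k)" for k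
      using decay by (intro ennreal_leI) (simp add: mult_ac)
    then have "(\<Sum>k. ennreal (norm (phi A B k \<sigma> x Psi))) \<le> (\<Sum>k. ennreal (M * norm x * \<gamma> ^ k))"
      by (intro suminf_le summableI)
    also have "\<dots> = ennreal (M * norm x * (1 / (1 - \<gamma>)))"
      using M geom by (subst suminf_ennreal2) (simp_all add: sums_iff)
    also have "M * norm x * (1 / (1 - \<gamma>)) = M / (1 - \<gamma>) * norm x"
      by simp
    also have "ennreal (M / (1 - \<gamma>) * norm x) \<le> ennreal (C * norm x)"
      by (intro ennreal_leI mult_right_mono) (simp_all add: C_def)
    finally show ?thesis .
  qed
  have "V_enn A B x \<le> ennreal (C * norm x)" for x
  proof -
    have "V_enn A B x \<le> (SUP \<sigma>. \<Sum>k. ennreal (norm (phi A B k \<sigma> x Psi)))"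
      unfolding V_enn_def by (rule INF_lower) simp
    also have "\<dots> \<le> ennreal (C * norm x)"
      by (rule SUP_least) (rule cost_bound)
    finally show ?thesis .
  qed
  moreover have "1 \<le> C" by (simp add: C_def)
  ultimately show ?thesis by blast
qed

lemma V_enn_eq: "V_enn A B x = ennreal (V A B x)"
proof -
  obtain C where "V_enn A B x \<le> ennreal (C * norm x)" using V_enn_bound by blast
  then have "V_enn A B x \<noteq> top" by (rule neq_top_trans[OF ennreal_neq_top])
  then show ?thesis by (simp add: V_def top.not_eq_extremum)
qed

lemma V_nonneg: "0 \<le> V A B x"
  by (simp add: V_def)

lemma V_bound: "\<exists>C\<ge>1. \<forall>x. V A B x \<le> C * norm x"
proof -
  obtain C where C: "1 \<le> C" "\<And>x. V_enn A B x \<le> ennreal (C * norm x)"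
    using V_enn_bound by blast
  have "V A B x \<le> C * norm x" for x
    using C(2)[of x] C(1) by (simp add: V_enn_eq)
  with C(1) show ?thesis by blast
qed

lemma le_V_of_le_worst_cost: "(\<And>U. ennreal r \<le> worst_cost U x) \<Longrightarrow> r \<le> V A B x"
  using INF_greatest[of UNIV "ennreal r" "\<lambda>U. worst_cost U x"] V_nonneg[of x]
  by (simp add: V_enn_eq_INF_worst_cost[symmetric] V_enn_eq)

lemma V_le_of_cost_le:
  assumes "\<And>\<sigma>. cost U \<sigma> x \<le> ennreal r" "0 \<le> r"
  shows "V A B x \<le> r"
proof -
  have "V_enn A B x \<le> ennreal r"
    using V_enn_le_worst_cost SUP_least[of UNIV "\<lambda>\<sigma>. cost U \<sigma> x", OF assms(1)]
    unfolding worst_cost_def by (rule order_trans)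
  with assms(2) show ?thesis by (simp add: V_enn_eq)
qed

lemma ex_cost_le_V_add:
  assumes "0 < e" shows "\<exists>U. \<forall>\<sigma>. cost U \<sigma> x \<le> ennreal (V A B x + e)"
proof -
  have "(INF U. worst_cost U x) < ennreal (V A B x + e)"
    unfolding V_enn_eq_INF_worst_cost[symmetric] V_enn_eq
    using assms V_nonneg[of x] by (intro ennreal_lessI) simp_all
  then obtain U where "worst_cost U x < ennreal (V A B x + e)" unfolding INF_less_iff by blast
  then have "cost U \<sigma> x \<le> ennreal (V A B x + e)" for \<sigma>
    using order_trans[OF cost_le_worst_cost less_imp_le] by blast
  then show ?thesis by blast
qed

lemma norm_le_V: "norm x \<le> V A B x"
  by (rule le_V_of_le_worst_cost) (rule order_trans[OF norm_le_cost cost_le_worst_cost])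

lemma V_sublinear: "V A B (a *\<^sub>R x + b *\<^sub>R y) \<le> \<bar>a\<bar> * V A B x + \<bar>b\<bar> * V A B y"
proof (rule field_le_epsilon)
  fix d :: real assume "0 < d"
  define e where "e = d / (\<bar>a\<bar> + \<bar>b\<bar> + 1)"
  have "0 < e" "(\<bar>a\<bar> + \<bar>b\<bar>) * e \<le> d"
    using \<open>0 < d\<close> by (simp_all add: e_def field_simps)
  obtain U U' where U: "\<And>\<sigma>. cost U \<sigma> x \<le> ennreal (V A B x + e)"
    and U': "\<And>\<sigma>. cost U' \<sigma> y \<le> ennreal (V A B y + e)"
    using ex_cost_le_V_add[OF \<open>0 < e\<close>] by meson
  have "cost (\<lambda>s. a *\<^sub>R U s + b *\<^sub>R U' s) \<sigma> (a *\<^sub>R x + b *\<^sub>R y)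
      \<le> ennreal (\<bar>a\<bar> * (V A B x + e) + \<bar>b\<bar> * (V A B y + e))" for \<sigma>
  proof -
    note cost_linear_le
    also have "ennreal \<bar>a\<bar> * cost U \<sigma> x + ennreal \<bar>b\<bar> * cost U' \<sigma> y
        \<le> ennreal \<bar>a\<bar> * ennreal (V A B x + e) + ennreal \<bar>b\<bar> * ennreal (V A B y + e)"
      using U U' by (intro add_mono mult_left_mono) simp_all
    also have "\<dots> = ennreal (\<bar>a\<bar> * (V A B x + e) + \<bar>b\<bar> * (V A B y + e))"
      using \<open>0 < e\<close> V_nonneg[of x] V_nonneg[of y] by (simp add: ennreal_mult)
    finally show ?thesis .
  qed
  then have "V A B (a *\<^sub>R x + b *\<^sub>R y) \<le> \<bar>a\<bar> * (V A B x + e) + \<bar>b\<bar> * (V A B y + e)"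
    by (rule V_le_of_cost_le) (use \<open>0 < e\<close> V_nonneg in simp)
  with \<open>(\<bar>a\<bar> + \<bar>b\<bar>) * e \<le> d\<close>
  show "V A B (a *\<^sub>R x + b *\<^sub>R y) \<le> \<bar>a\<bar> * V A B x + \<bar>b\<bar> * V A B y + d"
    by (simp add: algebra_simps)
qed

lemma V_scaleR: "V A B (c *\<^sub>R x) = \<bar>c\<bar> * V A B x"
proof (cases "c = 0")
  case True
  obtain C where "V A B 0 \<le> C * norm (0 :: real^'n)" using V_bound by blast
  with V_nonneg[of 0] True show ?thesis by simp
next
  case False
  have le: "V A B (c *\<^sub>R x) \<le> \<bar>c\<bar> * V A B x" for c x
    using V_sublinear[of c x 0 0] by simp
  have "V A B x \<le> \<bar>1 / c\<bar> * V A B (c *\<^sub>R x)"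
    using le[of "1 / c" "c *\<^sub>R x"] False by simp
  with False le[of c x] show ?thesis by (simp add: field_simps)
qed

lemma is_norm_V: "is_norm (V A B)"
  unfolding is_norm_def
proof (intro conjI allI)
  fix x y :: "real^'n" and c :: real
  show "0 \<le> V A B x" by (rule V_nonneg)
  show "V A B x = 0 \<longleftrightarrow> x = 0"
    using norm_le_V[of x] V_scaleR[of 0 x] by auto
  show "V A B (c *\<^sub>R x) = \<bar>c\<bar> * V A B x" by (rule V_scaleR)
  show "V A B (x + y) \<le> V A B x + V A B y"
    using V_sublinear[of 1 x 1 y] by simp
qed

lemma continuous_on_V: "continuous_on S (V A B)"
proof -
  obtain C where "1 \<le> C" "\<And>x. V A B x \<le> C * norm x" using V_bound by blast
  then have "C-lipschitz_on UNIV (V A B)" by (intro is_norm_lipschitz is_norm_V) simp_all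
  then show ?thesis by (rule continuous_on_subset[OF lipschitz_on_continuous_on]) simp
qed

lemma ex_is_arg_min_V_next: "\<exists>u. is_arg_min (\<lambda>u. V A B (A i *v x + B i *v u)) (\<lambda>_. True) u"
proof -
  let ?S = "range (\<lambda>u. A i *v x + B i *v u)"
  obtain y where "y \<in> ?S" "\<And>z. z \<in> ?S \<Longrightarrow> V A B y \<le> V A B z"
    using continuous_coercive_attains_inf[OF closed_range_affine_mat rangeI continuous_on_V norm_le_V]
    by blast
  then show ?thesis by (auto simp: is_arg_min_linorder)
qed

lemma INF_V_next_le: "(INF u. V A B (A i *v x + B i *v u)) \<le> V A B (A i *v x + B i *v v)"
  by (rule cINF_lower) (auto intro: bdd_belowI[of _ 0] simp: V_nonneg)

lemma INF_V_next_nonneg: "0 \<le> (INF u. V A B (A i *v x + B i *v u))"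
  by (rule cINF_greatest) (simp_all add: V_nonneg)

text \<open>The switching may open with any mode \<open>i\<close>; what remains is a game started at
  \<open>A i x + B i u\<close>, which costs at least its value.\<close>

lemma norm_add_INF_V_next_le_V: "norm x + (INF u. V A B (A i *v x + B i *v u)) \<le> V A B x"
proof (rule le_V_of_le_worst_cost)
  fix U
  let ?x1 = "A i *v x + B i *v U [i]"
  have "ennreal (norm x + (INF u. V A B (A i *v x + B i *v u))) \<le> ennreal (norm x + V A B ?x1)"
    using INF_V_next_le[of i x "U [i]"] by (intro ennreal_leI) simp
  also have "\<dots> = ennreal (norm x) + V_enn A B ?x1"
    by (simp add: V_enn_eq V_nonneg)
  also have "\<dots> \<le> ennreal (norm x) + worst_cost (\<lambda>s. U (i # s)) ?x1"
    by (intro add_left_mono V_enn_le_worst_cost)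
  also have "\<dots> \<le> worst_cost U x"
    by (rule norm_add_worst_cost_Cons_le)
  finally show "ennreal (norm x + (INF u. V A B (A i *v x + B i *v u))) \<le> worst_cost U x" .
qed

text \<open>Conversely, answer the first mode \<open>i\<close> with a minimising input and then play a
  controller that is \<open>e\<close>-optimal from the resulting state.\<close>

lemma V_le_norm_add_SUP_INF_V_next:
  "V A B x \<le> norm x + (SUP i. INF u. V A B (A i *v x + B i *v u))"
proof (rule field_le_epsilon)
  fix e :: real assume "0 < e"
  let ?next = "\<lambda>i. INF u. V A B (A i *v x + B i *v u)"
  let ?M = "SUP i. ?next i"
  have "?next i \<le> V A B x" for i
    using norm_add_INF_V_next_le_V[of x i] norm_ge_zero[of x] by linarith
  then have next_le_M: "?next i \<le> ?M" for i by (intro cSUP_upper bdd_aboveI2) auto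
  have "0 \<le> ?M" using order_trans[OF INF_V_next_nonneg next_le_M] .
  have "\<forall>i. \<exists>u. is_arg_min (\<lambda>v. V A B (A i *v x + B i *v v)) (\<lambda>_. True) u"
    using ex_is_arg_min_V_next by blast
  then obtain u where u: "\<forall>i. is_arg_min (\<lambda>v. V A B (A i *v x + B i *v v)) (\<lambda>_. True) (u i)"
    by (rule choice[THEN exE])
  have "\<exists>W. \<forall>\<sigma>. cost W \<sigma> (A i *v x + B i *v u i) \<le> ennreal (?next i + e)" for i
    unfolding INF_eq_of_is_arg_min[OF u[rule_format]] by (rule ex_cost_le_V_add[OF \<open>0 < e\<close>])
  then have "\<forall>i. \<exists>W. \<forall>\<sigma>. cost W \<sigma> (A i *v x + B i *v u i) \<le> ennreal (?next i + e)"
    by blast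
  then obtain W where W: "\<forall>i \<sigma>. cost (W i) \<sigma> (A i *v x + B i *v u i) \<le> ennreal (?next i + e)"
    by (rule choice[THEN exE])
  have "cost (cons_controller u W) \<sigma> x \<le> ennreal (norm x + (?M + e))" for \<sigma>
  proof -
    have "cost (W (\<sigma> 0)) (\<sigma> \<circ> Suc) (A (\<sigma> 0) *v x + B (\<sigma> 0) *v u (\<sigma> 0)) \<le> ennreal (?next (\<sigma> 0) + e)"
      using W by blast
    also have "\<dots> \<le> ennreal (?M + e)"
      using next_le_M by (intro ennreal_leI) simp
    finally show ?thesis
      using \<open>0 < e\<close> \<open>0 \<le> ?M\<close> by (simp add: cost_cons_controller add_left_mono)
  qed
  then have "V A B x \<le> norm x + (?M + e)"
    by (rule V_le_of_cost_le) (use \<open>0 < e\<close> \<open>0 \<le> ?M\<close> in simp)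
  then show "V A B x \<le> norm x + ?M + e"
    by (simp add: add.assoc)
qed

lemma V_Bellman: "V A B x = norm x + (SUP i. INF u. V A B (A i *v x + B i *v u))"
proof (rule antisym)
  have "(INF u. V A B (A i *v x + B i *v u)) \<le> V A B x - norm x" for i
    using norm_add_INF_V_next_le_V[of x i] by simp
  then have "(SUP i. INF u. V A B (A i *v x + B i *v u)) \<le> V A B x - norm x"
    by (rule cSUP_least[OF UNIV_not_empty])
  then show "norm x + (SUP i. INF u. V A B (A i *v x + B i *v u)) \<le> V A B x" by simp
qed (rule V_le_norm_add_SUP_INF_V_next)

lemma V_arg_min_step_contracts:
  "\<exists>\<gamma>. 0 \<le> \<gamma> \<and> \<gamma> < 1 \<and>
     (\<forall>i x p. is_arg_min (\<lambda>u. V A B (A i *v x + B i *v u)) (\<lambda>_. True) p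
        \<longrightarrow> V A B (A i *v x + B i *v p) \<le> \<gamma> * V A B x)"
proof -
  obtain C where C: "1 \<le> C" "\<And>x. V A B x \<le> C * norm x" using V_bound by blast
  have "V A B (A i *v x + B i *v p) \<le> (1 - 1 / C) * V A B x"
    if "is_arg_min (\<lambda>u. V A B (A i *v x + B i *v u)) (\<lambda>_. True) p" for i x p
  proof -
    have "V A B (A i *v x + B i *v p) \<le> V A B x - norm x"
      using norm_add_INF_V_next_le_V[of x i] INF_eq_of_is_arg_min[OF that] by simp
    also have "\<dots> \<le> V A B x - V A B x / C"
      using C(1) C(2)[of x] by (simp add: divide_le_eq mult.commute)
    finally show ?thesis by (simp add: algebra_simps)
  qed
  moreover have "0 \<le> 1 - 1 / C" "1 - 1 / C < 1" using C(1) by simp_all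
  ultimately show ?thesis by (intro exI[of _ "1 - 1 / C"]) blast
qed

end

theorem mainTheorem6:
  fixes A :: "'s::finite \<Rightarrow> real^'n^'n" and B :: "'s \<Rightarrow> real^'m^'n"
  assumes "DFS_m A B"
  shows "(\<forall>x. V_enn A B x < \<infinity>)
    \<and> is_norm (V A B)
    \<and> (\<forall>x i. \<exists>u. is_arg_min (\<lambda>v. V A B (A i *v x + B i *v v)) (\<lambda>_. True) u)
    \<and> (\<forall>x. V A B x = norm x + Max (range (\<lambda>i. INF u. V A B (A i *v x + B i *v u))))
    \<and> (\<forall>Phi. (\<forall>i x. is_arg_min (\<lambda>u. V A B (A i *v x + B i *v u)) (\<lambda>_. True) (Phi i x))
         \<longrightarrow> UES A B Phi
           \<and> (\<exists>\<gamma>. 0 \<le> \<gamma> \<and> \<gamma> < 1 \<and>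
                (\<forall>i x. V A B (A i *v x + B i *v Phi i x) \<le> \<gamma> * V A B x)))"
proof -
  interpret dfs_system A B by unfold_locales (rule assms)
  obtain \<gamma> where \<gamma>: "0 \<le> \<gamma>" "\<gamma> < 1" and contracts:
    "\<forall>i x p. is_arg_min (\<lambda>u. V A B (A i *v x + B i *v u)) (\<lambda>_. True) p
       \<longrightarrow> V A B (A i *v x + B i *v p) \<le> \<gamma> * V A B x"
    using V_arg_min_step_contracts by blast
  obtain C where C: "\<And>x. V A B x \<le> C * norm x" using V_bound by blast
  have Max_eq_SUP: "Max (range f) = (SUP i. f i)" for f :: "'s \<Rightarrow> real"
    by (simp add: cSup_eq_Max)
  show ?thesis
  proof (intro conjI allI impI)
    show "V_enn A B x < \<infinity>" for x by (simp add: V_enn_eq)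
    show "is_norm (V A B)" by (rule is_norm_V)
    show "\<exists>u. is_arg_min (\<lambda>v. V A B (A i *v x + B i *v v)) (\<lambda>_. True) u" for x i
      by (rule ex_is_arg_min_V_next)
    show "V A B x = norm x + Max (range (\<lambda>i. INF u. V A B (A i *v x + B i *v u)))" for x
      unfolding Max_eq_SUP by (rule V_Bellman)
    fix Phi
    assume "\<forall>i x. is_arg_min (\<lambda>u. V A B (A i *v x + B i *v u)) (\<lambda>_. True) (Phi i x)"
    with contracts have decrease: "V A B (A i *v x + B i *v Phi i x) \<le> \<gamma> * V A B x" for i x
      by blast
    show "UES A B Phi"
      using norm_le_V C \<gamma> decrease by (rule UES_of_Lyapunov)
    show "\<exists>\<gamma>. 0 \<le> \<gamma> \<and> \<gamma> < 1 \<and> (\<forall>i x. V A B (A i *v x + B i *v Phi i x) \<le> \<gamma> * V A B x)"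
      using \<gamma> decrease by blast
  qed
qed

end
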